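(* Let $X$ be a metric space, let $A\subseteq X$ be nonempty and let $Y$ be a hyperconvex metric space. Let $\Phi_c:\mathcal{N}(A,Y)\to\mathcal{P}(\mathcal{N}(X,Y))$ assign to each $f$ the set of all $f'\in\mathcal{N}(X,Y)$ with $f'|_A=f$ and $f'(X)\subseteq\mathrm{cov}(f(A))$. Then $\Phi_c$ is a nonexpansive multivalued mapping, i.e. $\Phi_c(f)\neq\emptyset$ and $H(\Phi_c(f),\Phi_c(g))\le d_\infty(f,g)$ for all $f,g\in\mathcal{N}(A,Y)$.
   Context: A metric space $Y$ is hyperconvex if $\bigcap_\alpha B(x_\alpha,r_\alpha)\ne\emptyset$ for every family of points $x_\alpha\in Y$ and $r_\alpha>0$ with $d(x_\alpha,x_\beta)\le r_\alpha+r_\beta$ ($B$ = closed ball). For a nonempty bounded $D\subseteq Y$, the admissible hull $\mathrm{cov}(D)$ is the intersection of all closed balls containing $D$, equivalently $\bigcap_{y\in Y}B(y,r_y(D))$ with $r_y(D)=\sup_{a\in D}d(y,a)$. $\mathcal{N}(A,Y)$ is the set of bounded nonexpansive maps $A\to Y$ with the supremum metric $d_\infty$; $H$ is the Pompeiu–Hausdorff distance in $(\mathcal{N}(X,Y),d_\infty)$. *)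

theory Defs
  imports "HOL-Analysis.Analysis"
begin

text \<open>Hyperconvexity of a metric space (here: a subset Y of a metric type, used with Y = UNIV).
  A family of closed balls is given as a set F of (centre, radius) pairs.\<close>
definition hyperconvex :: "'b::metric_space set \<Rightarrow> bool" where
  "hyperconvex Y \<longleftrightarrow>
     (\<forall>F. F \<subseteq> Y \<times> {0<..} \<longrightarrow>
        (\<forall>(x,r)\<in>F. \<forall>(y,s)\<in>F. dist x y \<le> r + s) \<longrightarrow>
        Y \<inter> (\<Inter>(x,r)\<in>F. cball x r) \<noteq> {})"

definition admissible_hull :: "'b::metric_space set \<Rightarrow> 'b set \<Rightarrow> 'b set" where
  "admissible_hull Y D = Y \<inter> \<Inter>{cball y r | y r. y \<in> Y \<and> D \<subseteq> cball y r}"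

text \<open>Bounded nonexpansive maps S \<rightarrow> Y (only values on S matter).\<close>
definition nonexp_maps :: "'a::metric_space set \<Rightarrow> 'b::metric_space set \<Rightarrow> ('a \<Rightarrow> 'b) set" where
  "nonexp_maps S Y = {f. f ` S \<subseteq> Y \<and> (\<forall>x\<in>S. \<forall>y\<in>S. dist (f x) (f y) \<le> dist x y) \<and> bounded (f ` S)}"

definition sup_dist :: "'a set \<Rightarrow> ('a \<Rightarrow> 'b::metric_space) \<Rightarrow> ('a \<Rightarrow> 'b) \<Rightarrow> real" where
  "sup_dist S f g = (SUP x\<in>S. dist (f x) (g x))"

definition haus_dist :: "'a set \<Rightarrow> ('a \<Rightarrow> 'b::metric_space) set \<Rightarrow> ('a \<Rightarrow> 'b) set \<Rightarrow> ereal" where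
  "haus_dist S P Q = max (SUP p\<in>P. INF q\<in>Q. ereal (sup_dist S p q))
                         (SUP q\<in>Q. INF p\<in>P. ereal (sup_dist S p q))"

definition Phi_c :: "'a::metric_space set \<Rightarrow> 'a set \<Rightarrow> 'b::metric_space set \<Rightarrow> ('a \<Rightarrow> 'b) \<Rightarrow> ('a \<Rightarrow> 'b) set" where
  "Phi_c X A Y f = {f' \<in> nonexp_maps X Y. (\<forall>x\<in>A. f' x = f x) \<and> f' ` X \<subseteq> admissible_hull Y (f ` A)}"

end

theory Submission
  imports Defs
begin

text \<open>Nonexpansive maps into a hyperconvex space extend (Aronszajn--Panitchpakdi): take a maximal
  nonexpansive partial extension by Zorn's lemma; at a missing point x the balls of radius
  d(x, a) around the known values pairwise satisfy the hyperconvexity condition, so they meet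
  and the extension grows. This survives extra constraints, at each x, of lying in a family of
  pairwise intersecting balls that loosens by d(x, a) when passing from a to x. Taking as
  constraints the balls containing g(A) puts all values in cov(g(A)), so \<Phi>_c(g) is nonempty;
  adding the ball of radius \<delta> = d_\<infinity>(f, g) around f'(x), for f' in \<Phi>_c(f), yields g' in
  \<Phi>_c(g) with d_\<infinity>(f', g') \<le> \<delta>, which bounds the Hausdorff distance.\<close>

lemma hyperconvex_cballs_intersect:
  fixes F :: "('b::metric_space \<times> real) set"
  assumes hc: "hyperconvex (UNIV :: 'b set)"
    and pairwise: "\<And>c r c' r'. (c, r) \<in> F \<Longrightarrow> (c', r') \<in> F \<Longrightarrow> dist c c' \<le> r + r'"
  obtains z where "\<And>c r. (c, r) \<in> F \<Longrightarrow> dist c z \<le> r"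
proof (cases "\<exists>c. (c, 0) \<in> F")
  \<comment> \<open>Hyperconvexity only speaks of positive radii, but a ball of radius 0 in the family is a
    point lying in all the others.\<close>
  case True
  then obtain c where "(c, 0) \<in> F" by blast
  then show ?thesis using pairwise that by fastforce
next
  case False
  have "r > 0" if "(c, r) \<in> F" for c r
    using pairwise[OF that that] False that by (cases "r = 0") auto
  then have "F \<subseteq> UNIV \<times> {0<..}" by auto
  moreover have "\<forall>(x, r)\<in>F. \<forall>(y, s)\<in>F. dist x y \<le> r + s" using pairwise by auto
  ultimately have "UNIV \<inter> (\<Inter>(c, r)\<in>F. cball c r) \<noteq> {}"
    using hc unfolding hyperconvex_def by (elim allE impE)
  then obtain z where "z \<in> (\<Inter>(c, r)\<in>F. cball c r)" by auto
  then have "dist c z \<le> r" if "(c, r) \<in> F" for c r using that by auto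
  then show ?thesis by (rule that)
qed

definition compatible_cball_constraints ::
    "('a::metric_space \<Rightarrow> ('b::metric_space \<times> real) set) \<Rightarrow> bool"
  where "compatible_cball_constraints B \<longleftrightarrow>
    (\<forall>x c r c' r'. (c, r) \<in> B x \<longrightarrow> (c', r') \<in> B x \<longrightarrow> dist c c' \<le> r + r') \<and>
    (\<forall>x a y. (\<forall>c r. (c, r) \<in> B a \<longrightarrow> dist c y \<le> r) \<longrightarrow>
       (\<forall>c r. (c, r) \<in> B x \<longrightarrow> dist c y \<le> dist x a + r))"

definition constrained_nonexpansive_graph ::
    "('a::metric_space \<Rightarrow> ('b::metric_space \<times> real) set) \<Rightarrow> ('a \<times> 'b) set \<Rightarrow> bool"
  where "constrained_nonexpansive_graph B G \<longleftrightarrow>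
    (\<forall>x y c r. (x, y) \<in> G \<longrightarrow> (c, r) \<in> B x \<longrightarrow> dist c y \<le> r) \<and>
    (\<forall>x y x' y'. (x, y) \<in> G \<longrightarrow> (x', y') \<in> G \<longrightarrow> dist y y' \<le> dist x x')"

lemma constrained_nonexpansive_graph_insert:
  assumes hc: "hyperconvex (UNIV :: 'b::metric_space set)"
    and B: "compatible_cball_constraints B"
    and G: "constrained_nonexpansive_graph B (G :: ('a::metric_space \<times> 'b) set)"
  obtains z where "constrained_nonexpansive_graph B (insert (x, z) G)"
proof -
  have B_pairwise: "dist c c' \<le> r + r'" if "(c, r) \<in> B x" "(c', r') \<in> B x" for c r c' r'
    using B that unfolding compatible_cball_constraints_def by blast
  have G_constr: "dist c y \<le> r" if "(a, y) \<in> G" "(c, r) \<in> B a" for a y c r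
    using G that unfolding constrained_nonexpansive_graph_def by blast
  have G_nonexp: "dist y y' \<le> dist a a'" if "(a, y) \<in> G" "(a', y') \<in> G" for a y a' y'
    using G that unfolding constrained_nonexpansive_graph_def by blast
  have B_transfer: "dist c y \<le> dist x a + r" if "(a, y) \<in> G" "(c, r) \<in> B x" for a y c r
    using B G_constr[OF that(1)] that(2) unfolding compatible_cball_constraints_def by blast
  define F where "F = (\<lambda>(a, y). (y, dist x a)) ` G \<union> B x"
  have "dist c c' \<le> r + r'" if cr: "(c, r) \<in> F" and cr': "(c', r') \<in> F" for c r c' r'
  proof (cases "(c, r) \<in> B x"; cases "(c', r') \<in> B x")
    assume "(c, r) \<in> B x" "(c', r') \<in> B x"
    then show ?thesis by (rule B_pairwise)
  next
    assume "(c, r) \<in> B x" "(c', r') \<notin> B x"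
    then obtain a where "(a, c') \<in> G" "r' = dist x a" using cr' unfolding F_def by auto
    then show ?thesis using B_transfer[of a c' c r] \<open>(c, r) \<in> B x\<close> by (simp add: dist_commute)
  next
    assume "(c, r) \<notin> B x" "(c', r') \<in> B x"
    then obtain a where "(a, c) \<in> G" "r = dist x a" using cr unfolding F_def by auto
    then show ?thesis using B_transfer[of a c c' r'] \<open>(c', r') \<in> B x\<close> by (simp add: dist_commute)
  next
    assume "(c, r) \<notin> B x" "(c', r') \<notin> B x"
    then obtain a a' where "(a, c) \<in> G" "r = dist x a" "(a', c') \<in> G" "r' = dist x a'"
      using cr cr' unfolding F_def by auto
    then show ?thesis using G_nonexp[of a c a' c'] dist_triangle3[of a a' x] by linarith
  qed
  then obtain z where z: "\<And>c r. (c, r) \<in> F \<Longrightarrow> dist c z \<le> r"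
    using hyperconvex_cballs_intersect[OF hc] by blast
  have z_G: "dist y z \<le> dist x a" if "(a, y) \<in> G" for a y
    using z[of y "dist x a"] that unfolding F_def by force
  show ?thesis
  proof
    show "constrained_nonexpansive_graph B (insert (x, z) G)"
      using G z_G z unfolding F_def constrained_nonexpansive_graph_def
      by (auto simp: dist_commute)
  qed
qed

lemma constrained_nonexpansive_extension:
  fixes A :: "'a::metric_space set" and f :: "'a \<Rightarrow> 'b::metric_space"
  assumes hc: "hyperconvex (UNIV :: 'b set)"
    and B: "compatible_cball_constraints B"
    and f: "1-lipschitz_on A f"
    and f_constr: "\<And>a c r. a \<in> A \<Longrightarrow> (c, r) \<in> B a \<Longrightarrow> dist c (f a) \<le> r"
  obtains h where "\<And>x. x \<in> A \<Longrightarrow> h x = f x" "1-lipschitz_on UNIV h"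
    "\<And>x c r. (c, r) \<in> B x \<Longrightarrow> dist c (h x) \<le> r"
proof -
  define S where "S = {G. (\<lambda>a. (a, f a)) ` A \<subseteq> G \<and> constrained_nonexpansive_graph B G}"
  have S_constr: "dist c y \<le> r" if "X \<in> S" "(x, y) \<in> X" "(c, r) \<in> B x" for X x y c r
    using that unfolding S_def constrained_nonexpansive_graph_def by blast
  have S_nonexp: "dist y y' \<le> dist x x'" if "X \<in> S" "(x, y) \<in> X" "(x', y') \<in> X" for X x y x' y'
    using that unfolding S_def constrained_nonexpansive_graph_def by blast
  have "(\<lambda>a. (a, f a)) ` A \<in> S"
    using f f_constr unfolding S_def constrained_nonexpansive_graph_def lipschitz_on_def by auto
  moreover have "\<Union>C \<in> S" if "C \<noteq> {}" "subset.chain S C" for C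
  proof -
    have "C \<subseteq> S" and chain: "\<And>X Y. X \<in> C \<Longrightarrow> Y \<in> C \<Longrightarrow> X \<subseteq> Y \<or> Y \<subseteq> X"
      using that(2) unfolding subset.chain_def by auto
    have "(\<lambda>a. (a, f a)) ` A \<subseteq> \<Union>C" using \<open>C \<noteq> {}\<close> \<open>C \<subseteq> S\<close> unfolding S_def by auto
    moreover have "dist c y \<le> r" if "(x, y) \<in> \<Union>C" "(c, r) \<in> B x" for x y c r
      using that \<open>C \<subseteq> S\<close> S_constr by blast
    moreover have "dist y y' \<le> dist x x'" if xy: "(x, y) \<in> \<Union>C" "(x', y') \<in> \<Union>C" for x y x' y'
    proof -
      obtain X X' where "X \<in> C" "X' \<in> C" "(x, y) \<in> X" "(x', y') \<in> X'" using xy by blast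
      with chain[of X X'] \<open>C \<subseteq> S\<close> S_nonexp show ?thesis by blast
    qed
    ultimately show ?thesis unfolding S_def constrained_nonexpansive_graph_def by blast
  qed
  ultimately obtain M where "M \<in> S" and maximal: "\<And>X. X \<in> S \<Longrightarrow> M \<subseteq> X \<Longrightarrow> X = M"
    using subset_Zorn_nonempty[of S] by blast
  then have f_M: "\<And>a. a \<in> A \<Longrightarrow> (a, f a) \<in> M" and M: "constrained_nonexpansive_graph B M"
    unfolding S_def by auto
  have total: "\<exists>y. (x, y) \<in> M" for x
  proof -
    obtain z where "constrained_nonexpansive_graph B (insert (x, z) M)"
      using constrained_nonexpansive_graph_insert[OF hc B M] .
    with \<open>M \<in> S\<close> have "insert (x, z) M \<in> S" unfolding S_def by blast
    with maximal have "insert (x, z) M = M" by blast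
    then show ?thesis by blast
  qed
  define h where "h x = (SOME y. (x, y) \<in> M)" for x
  have h_M: "(x, h x) \<in> M" for x unfolding h_def using total by (rule someI_ex)
  show ?thesis
  proof
    show "h x = f x" if "x \<in> A" for x
      using S_nonexp[OF \<open>M \<in> S\<close> h_M[of x] f_M[OF that]] by simp
    show "1-lipschitz_on UNIV h"
      using S_nonexp[OF \<open>M \<in> S\<close> h_M h_M] by (auto intro: lipschitz_onI)
    show "dist c (h x) \<le> r" if "(c, r) \<in> B x" for x c r
      using S_constr[OF \<open>M \<in> S\<close> h_M that] .
  qed
qed

lemma nonexp_maps_UNIV_iff: "f \<in> nonexp_maps S UNIV \<longleftrightarrow> 1-lipschitz_on S f \<and> bounded (f ` S)"
  by (simp add: nonexp_maps_def lipschitz_on_def)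

lemma mem_admissible_hull_UNIV:
  "z \<in> admissible_hull UNIV D \<longleftrightarrow> (\<forall>y r. D \<subseteq> cball y r \<longrightarrow> dist y z \<le> r)"
proof -
  have "admissible_hull UNIV D = (\<Inter>(y, r)\<in>{(y, r). D \<subseteq> cball y r}. cball y r)"
    unfolding admissible_hull_def by auto
  then show ?thesis by auto
qed

lemma bounded_admissible_hull_UNIV:
  assumes "bounded D"
  shows "bounded (admissible_hull UNIV D)"
proof -
  obtain y r where "D \<subseteq> cball y r" using assms bounded_subset_cball by blast
  then have "admissible_hull UNIV D \<subseteq> cball y r" by (auto simp: mem_admissible_hull_UNIV)
  then show ?thesis using bounded_cball bounded_subset by blast
qed

lemma Phi_c_UNIV_memI:
  assumes "bounded (g ` A)" "\<And>x. x \<in> A \<Longrightarrow> h x = g x" "1-lipschitz_on UNIV h"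
    "\<And>x. h x \<in> admissible_hull UNIV (g ` A)"
  shows "h \<in> Phi_c UNIV A UNIV g"
proof -
  have "range h \<subseteq> admissible_hull UNIV (g ` A)" using assms(4) by blast
  moreover then have "bounded (range h)"
    using bounded_admissible_hull_UNIV[OF assms(1)] bounded_subset by blast
  ultimately show ?thesis using assms(2,3) unfolding Phi_c_def nonexp_maps_UNIV_iff by blast
qed

lemma Phi_c_UNIV_near:
  fixes A :: "'a::metric_space set" and g p :: "'a \<Rightarrow> 'b::metric_space"
  assumes hc: "hyperconvex (UNIV :: 'b set)" and "A \<noteq> {}"
    and g: "g \<in> nonexp_maps A UNIV" and p: "1-lipschitz_on UNIV p"
    and near: "\<And>a. a \<in> A \<Longrightarrow> dist (p a) (g a) \<le> \<delta>"
    and near_hull: "\<And>x y r. g ` A \<subseteq> cball y r \<Longrightarrow> dist y (p x) \<le> r + \<delta>"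
  shows "\<exists>h\<in>Phi_c UNIV A UNIV g. \<forall>x. dist (p x) (h x) \<le> \<delta>"
proof -
  obtain a0 where "a0 \<in> A" using \<open>A \<noteq> {}\<close> by blast
  define B where "B x = insert (p x, \<delta>) {(y, r). g ` A \<subseteq> cball y r}" for x
  have B_iff: "(c, r) \<in> B x \<longleftrightarrow> (c, r) = (p x, \<delta>) \<or> g ` A \<subseteq> cball c r" for c r x
    unfolding B_def by auto
  have "0 \<le> \<delta>" using near[OF \<open>a0 \<in> A\<close>] by (meson order_trans zero_le_dist)
  have p_nonexp: "dist (p x) (p a) \<le> dist x a" for x a
    using lipschitz_onD[OF p] by simp
  have cball_g: "dist c (g a) \<le> r" if "g ` A \<subseteq> cball c r" "a \<in> A" for c r a
    using that by auto
  have B_compatible: "compatible_cball_constraints B"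
    unfolding compatible_cball_constraints_def
  proof (intro conjI allI impI)
    fix x c r c' r' assume "(c, r) \<in> B x" "(c', r') \<in> B x"
    moreover have "dist c c' \<le> r + r'" if "g ` A \<subseteq> cball c r" "g ` A \<subseteq> cball c' r'"
      using cball_g[OF that(1) \<open>a0 \<in> A\<close>] cball_g[OF that(2) \<open>a0 \<in> A\<close>]
        dist_triangle2[of c c' "g a0"] by linarith
    ultimately show "dist c c' \<le> r + r'"
      using \<open>0 \<le> \<delta>\<close> near_hull[of c r x] near_hull[of c' r' x] unfolding B_iff
      by (auto simp: dist_commute add.commute)
  next
    fix x a y c r
    assume y: "\<forall>c r. (c, r) \<in> B a \<longrightarrow> dist c y \<le> r" and "(c, r) \<in> B x"
    then consider "c = p x" "r = \<delta>" | "g ` A \<subseteq> cball c r" unfolding B_iff by auto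
    then show "dist c y \<le> dist x a + r"
    proof cases
      case 1
      have "dist (p a) y \<le> \<delta>" using y B_iff by blast
      then show ?thesis using 1 p_nonexp[of x a] dist_triangle[of "p x" y "p a"] by simp
    next
      case 2
      then have "dist c y \<le> r" using y B_iff by blast
      then show ?thesis using zero_le_dist[of x a] by linarith
    qed
  qed
  have g_lip: "1-lipschitz_on A g" using g unfolding nonexp_maps_UNIV_iff by blast
  have g_B: "dist c (g a) \<le> r" if "a \<in> A" "(c, r) \<in> B a" for a c r
    using that near[of a] cball_g unfolding B_iff by (auto simp: dist_commute)
  obtain h where h: "\<And>x. x \<in> A \<Longrightarrow> h x = g x" "1-lipschitz_on UNIV h"
    and h_B: "\<And>x c r. (c, r) \<in> B x \<Longrightarrow> dist c (h x) \<le> r"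
    using constrained_nonexpansive_extension[OF hc B_compatible g_lip g_B] by blast
  have "h x \<in> admissible_hull UNIV (g ` A)" for x
    using h_B B_iff unfolding mem_admissible_hull_UNIV by blast
  then have "h \<in> Phi_c UNIV A UNIV g"
    using g h by (intro Phi_c_UNIV_memI) (auto simp: nonexp_maps_UNIV_iff)
  moreover have "dist (p x) (h x) \<le> \<delta>" for x using h_B B_iff by blast
  ultimately show ?thesis by blast
qed

lemma Phi_c_UNIV_nonempty:
  assumes "hyperconvex (UNIV :: 'b::metric_space set)" "A \<noteq> {}"
    and g: "g \<in> nonexp_maps A (UNIV :: 'b set)"
  shows "Phi_c UNIV A UNIV g \<noteq> {}"
proof -
  obtain c R where R: "g ` A \<subseteq> cball c R"
    using g bounded_subset_cball unfolding nonexp_maps_UNIV_iff by blast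
  obtain a0 where "a0 \<in> A" using \<open>A \<noteq> {}\<close> by blast
  \<comment> \<open>Follow the constant map at the centre of a ball containing g(A).\<close>
  have "\<exists>h\<in>Phi_c UNIV A UNIV g. \<forall>x. dist c (h x) \<le> R"
  proof (rule Phi_c_UNIV_near[OF assms])
    show "1-lipschitz_on UNIV (\<lambda>_. c)" by (auto intro: lipschitz_onI)
    show "dist c (g a) \<le> R" if "a \<in> A" for a using R that by auto
    show "dist y c \<le> r + R" if "g ` A \<subseteq> cball y r" for y r
      using R that \<open>a0 \<in> A\<close> dist_triangle[of y c "g a0"] by (force simp: dist_commute)
  qed
  then show ?thesis by blast
qed

lemma Phi_c_UNIV_follow:
  assumes hc: "hyperconvex (UNIV :: 'b::metric_space set)" and "A \<noteq> {}"
    and g: "g \<in> nonexp_maps A (UNIV :: 'b set)"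
    and f': "f' \<in> Phi_c UNIV A UNIV f"
    and fg: "\<And>a. a \<in> A \<Longrightarrow> dist (f a) (g a) \<le> \<delta>"
  shows "\<exists>g'\<in>Phi_c UNIV A UNIV g. \<forall>x. dist (f' x) (g' x) \<le> \<delta>"
proof (rule Phi_c_UNIV_near[OF hc \<open>A \<noteq> {}\<close> g])
  show "1-lipschitz_on UNIV f'" using f' unfolding Phi_c_def nonexp_maps_UNIV_iff by blast
  show "dist (f' a) (g a) \<le> \<delta>" if "a \<in> A" for a using f' fg that unfolding Phi_c_def by auto
  show "dist y (f' x) \<le> r + \<delta>" if "g ` A \<subseteq> cball y r" for x y r
  proof -
    have "f ` A \<subseteq> cball y (r + \<delta>)"
    proof
      fix z assume "z \<in> f ` A"
      then obtain a where "a \<in> A" "z = f a" by blast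
      then show "z \<in> cball y (r + \<delta>)"
        using that fg[of a] dist_triangle[of y "f a" "g a"] by (force simp: dist_commute)
    qed
    moreover have "f' x \<in> admissible_hull UNIV (f ` A)" using f' unfolding Phi_c_def by blast
    ultimately show ?thesis unfolding mem_admissible_hull_UNIV by blast
  qed
qed

lemma dist_le_sup_dist:
  assumes "bounded (f ` A)" "bounded (g ` A)" "a \<in> A"
  shows "dist (f a) (g a) \<le> sup_dist A f g"
proof -
  obtain c r c' r' where "f ` A \<subseteq> cball c r" "g ` A \<subseteq> cball c' r'"
    using assms(1,2) bounded_subset_cball by metis
  then have "dist (f x) (g x) \<le> r + dist c c' + r'" if "x \<in> A" for x
    using that dist_triangle3[of "f x" "g x" c] dist_triangle[of c "g x" c']
    by (force simp: dist_commute)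
  then have "bdd_above ((\<lambda>x. dist (f x) (g x)) ` A)" by (rule bdd_aboveI2)
  then show ?thesis unfolding sup_dist_def using assms(3) by (rule cSUP_upper2) simp
qed

lemma sup_dist_le:
  assumes "S \<noteq> {}" "\<And>x. x \<in> S \<Longrightarrow> dist (p x) (q x) \<le> d"
  shows "sup_dist S p q \<le> d"
  unfolding sup_dist_def using assms by (intro cSUP_least) auto

lemma haus_dist_le:
  assumes "\<And>p. p \<in> P \<Longrightarrow> \<exists>q\<in>Q. sup_dist S p q \<le> d"
    and "\<And>q. q \<in> Q \<Longrightarrow> \<exists>p\<in>P. sup_dist S p q \<le> d"
  shows "haus_dist S P Q \<le> ereal d"
  unfolding haus_dist_def
proof (intro max.boundedI SUP_least)
  fix p assume "p \<in> P"
  then obtain q where "q \<in> Q" "sup_dist S p q \<le> d" using assms(1) by blast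
  then show "(INF q\<in>Q. ereal (sup_dist S p q)) \<le> ereal d" by (auto intro: INF_lower2)
next
  fix q assume "q \<in> Q"
  then obtain p where "p \<in> P" "sup_dist S p q \<le> d" using assms(2) by blast
  then show "(INF p\<in>P. ereal (sup_dist S p q)) \<le> ereal d" by (auto intro: INF_lower2)
qed

theorem lemma5p11:
  fixes A :: "'a::metric_space set"
  assumes "A \<noteq> {}"
    and "hyperconvex (UNIV :: 'b::metric_space set)"
  shows "\<forall>f\<in>nonexp_maps A (UNIV :: 'b set). \<forall>g\<in>nonexp_maps A (UNIV :: 'b set).
           Phi_c UNIV A UNIV f \<noteq> {} \<and>
           haus_dist UNIV (Phi_c UNIV A UNIV f) (Phi_c UNIV A UNIV g) \<le> ereal (sup_dist A f g)"
proof (intro ballI conjI)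
  fix f g :: "'a \<Rightarrow> 'b" assume f: "f \<in> nonexp_maps A UNIV" and g: "g \<in> nonexp_maps A UNIV"
  show "Phi_c UNIV A UNIV f \<noteq> {}" using Phi_c_UNIV_nonempty[OF assms(2,1) f] .
  have fg: "dist (f a) (g a) \<le> sup_dist A f g" and gf: "dist (g a) (f a) \<le> sup_dist A f g"
    if "a \<in> A" for a
    using f g dist_le_sup_dist[OF _ _ that] by (auto simp: nonexp_maps_UNIV_iff dist_commute)
  show "haus_dist UNIV (Phi_c UNIV A UNIV f) (Phi_c UNIV A UNIV g) \<le> ereal (sup_dist A f g)"
  proof (rule haus_dist_le)
    fix f' assume "f' \<in> Phi_c UNIV A UNIV f"
    with Phi_c_UNIV_follow[OF assms(2,1) g this fg]
    show "\<exists>g'\<in>Phi_c UNIV A UNIV g. sup_dist UNIV f' g' \<le> sup_dist A f g"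
      by (auto intro: sup_dist_le)
  next
    fix g' assume "g' \<in> Phi_c UNIV A UNIV g"
    with Phi_c_UNIV_follow[OF assms(2,1) f this gf]
    show "\<exists>f'\<in>Phi_c UNIV A UNIV f. sup_dist UNIV f' g' \<le> sup_dist A f g"
      by (auto intro: sup_dist_le simp: dist_commute)
  qed
qed

end
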